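(* Let $f:\mathbb{R}^{n_x}\to\mathbb{R}^{n_y}$ be a deterministic score predictor and let $\bar D:\mathbb{R}^{n_x}\to\mathbb{R}^{n_y\times n_u}$ be given. Fix $G_u\in\mathbb{R}^{n_u\times\nu}$, an integer $n_r\ge1$, orthogonal matrices $R_1,\dots,R_{n_r}\in\mathbb{R}^{n_y\times n_y}$ and $R_0=\mathbf I$. For $\alpha\in\mathbb{R}^\nu_{\ge0}$ let $\mathcal Y_\alpha(x)=\{f(x)+\bar D(x)u\mid u\in\langle\mathbf 0,G_u\mathrm{diag}(\alpha)\rangle\}$. Given data $(x^{(m)},y^{(m)})$, $m\in\mathcal M_{\mathrm{cal}}$, where each $y^{(m)}\in\{0,1\}^{n_y}$ is a unit vector $e_{k_m}$ (so $\mathrm{classes}(y^{(m)})=\{k_m\}$), let $T_m\in\mathbb{R}^{n_y\times n_y}$ be the matrix each of whose rows equals $e_{k_m}^\top$, minus the identity, i.e. $T_m=\mathbf 1e_{k_m}^\top-\mathbf I$. Consider the linear program in $\alpha\in\mathbb{R}^\nu$ and $\beta_m\in\mathbb{R}^\nu$: $$\min_{\alpha,\beta}\ \sum_{m\in\mathcal M_{\mathrm{cal}}}\sum_{i=0}^{n_r}\mathbf 1^\top\bigl|R_i\bar D(x^{(m)})G_u\bigr|\alpha$$ subject to, for all $m$: $\mathbf 0\le\alpha$, $\mathbf 0\le\alpha+\beta_m$, $\mathbf 0\le\alpha-\beta_m$, and $-T_mf(x^{(m)})\le T_m\bar D(x^{(m)})G_u\beta_m$. If $(\alpha^*,\beta^*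 )$ is an optimal solution of this linear program, then $\alpha^*$ is an optimal solution of $$\min_{\alpha\in\mathbb{R}^\nu_{\ge0}}\sum_{m}\sum_{i=0}^{n_r}\|R_i\mathcal Y_\alpha(x^{(m)})\|_I\quad\text{s.t.}\quad \mathrm{classes}(y^{(m)})\subseteq\mathrm{classes}(\mathcal Y_\alpha(x^{(m)}))\ \ \forall m\in\mathcal M_{\mathrm{cal}}.$$
   Context: $\langle c,G\rangle=\{c+G\lambda\mid\lambda\in[-1,1]^\nu\}$ denotes a zonotope; its interval norm is $\|\langle c,G\rangle\|_I=\mathbf 1^\top|G|\mathbf 1$ ($|\cdot|$ elementwise), with $R\langle c,G\rangle=\langle Rc,RG\rangle$, so $\|R_i\mathcal Y_\alpha(x)\|_I=\mathbf 1^\top|R_i\bar D(x)G_u\mathrm{diag}(\alpha)|\mathbf 1$. For a set $\mathcal Y\subseteq\mathbb{R}^{n_y}$, $\mathrm{classes}(\mathcal Y)=\{i\mid\exists y\in\mathcal Y: y_{(i)}=\max_j y_{(j)}\}$, and for a vector $y$, $\mathrm{classes}(y)=\{i\mid y_{(i)}=\max_jy_{(j)}\}$. Inequalities between vectors are elementwise. *)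

theory Defs
  imports "HOL-Analysis.Analysis"
begin

definition zonotope :: "real^'n \<Rightarrow> real^'v^'n \<Rightarrow> (real^'n) set" where
  "zonotope c G = {c + G *v l | l. \<forall>j. \<bar>l $ j\<bar> \<le> 1}"

text \<open>Interval norm of a zonotope given by its generator matrix: 1^T |G| 1.\<close>
definition interval_norm :: "real^'v^'n \<Rightarrow> real" where
  "interval_norm G = (\<Sum>r\<in>UNIV. \<Sum>j\<in>UNIV. \<bar>G $ r $ j\<bar>)"

definition diag_mat :: "real^'v \<Rightarrow> real^'v^'v" where
  "diag_mat a = (\<chi> i j. if i = j then a $ i else 0)"

definition classes_set :: "(real^'n) set \<Rightarrow> 'n set" where
  "classes_set Y = {i. \<exists>y\<in>Y. \<forall>j. y $ j \<le> y $ i}"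

definition classes_vec :: "real^'n \<Rightarrow> 'n set" where
  "classes_vec y = {i. \<forall>j. y $ j \<le> y $ i}"

definition Yset :: "('x \<Rightarrow> real^'y) \<Rightarrow> ('x \<Rightarrow> real^'u^'y) \<Rightarrow> real^'v^'u
     \<Rightarrow> real^'v \<Rightarrow> 'x \<Rightarrow> (real^'y) set" where
  "Yset f D G a x = {f x + D x *v u | u. u \<in> zonotope 0 (G ** diag_mat a)}"

text \<open>Zonotope-size objective: sum_m sum_{i=0}^{n_r} || R_i Y_alpha(x_m) ||_I, where
  R_i <f x, D x G diag a> = <R_i f x, R_i D x G diag a>.\<close>
definition zono_obj :: "'m set \<Rightarrow> ('m \<Rightarrow> 'x) \<Rightarrow> ('x \<Rightarrow> real^'u^'y) \<Rightarrow> real^'v^'u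
     \<Rightarrow> nat \<Rightarrow> (nat \<Rightarrow> real^'y^'y) \<Rightarrow> real^'v \<Rightarrow> real" where
  "zono_obj M xs D G nr R a =
     (\<Sum>m\<in>M. \<Sum>i\<in>{0..nr}. interval_norm (R i ** D (xs m) ** G ** diag_mat a))"

definition lp_obj :: "'m set \<Rightarrow> ('m \<Rightarrow> 'x) \<Rightarrow> ('x \<Rightarrow> real^'u^'y) \<Rightarrow> real^'v^'u
     \<Rightarrow> nat \<Rightarrow> (nat \<Rightarrow> real^'y^'y) \<Rightarrow> real^'v \<Rightarrow> real" where
  "lp_obj M xs D G nr R a =
     (\<Sum>m\<in>M. \<Sum>i\<in>{0..nr}. \<Sum>r\<in>UNIV. \<Sum>j\<in>UNIV. \<bar>(R i ** D (xs m) ** G) $ r $ j\<bar> * a $ j)"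

definition Tmat :: "'y \<Rightarrow> real^'y^'y" where
  "Tmat k = (\<chi> r c. if c = k then 1 else 0) - mat 1"

definition lp_feasible :: "'m set \<Rightarrow> ('m \<Rightarrow> 'x) \<Rightarrow> ('m \<Rightarrow> 'y) \<Rightarrow> ('x \<Rightarrow> real^'y)
     \<Rightarrow> ('x \<Rightarrow> real^'u^'y) \<Rightarrow> real^'v^'u \<Rightarrow> real^'v \<Rightarrow> ('m \<Rightarrow> real^'v) \<Rightarrow> bool" where
  "lp_feasible M xs k f D G a b \<longleftrightarrow>
     0 \<le> a \<and> (\<forall>m\<in>M. 0 \<le> a + b m \<and> 0 \<le> a - b m \<and>
        - (Tmat (k m) *v f (xs m)) \<le> (Tmat (k m) ** D (xs m) ** G) *v b m)"

end

theory Submission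
  imports Defs
begin

text \<open>For \<open>\<alpha> \<ge> 0\<close> the generator matrix \<open>R\<^sub>i D(x) G diag(\<alpha>)\<close> has entries
  \<open>(R\<^sub>i D(x) G)\<^sub>r\<^sub>j \<alpha>\<^sub>j\<close>, so its interval norm is linear in \<open>\<alpha>\<close> and the two objectives coincide.
  A point of \<open>\<Y>\<^sub>\<alpha>(x)\<close> is \<open>f(x) + D(x) G \<beta>\<close> with \<open>|\<beta>| \<le> \<alpha>\<close>, and \<open>k\<close> is one of its classes iff
  \<open>T\<^sub>k (f(x) + D(x) G \<beta>) \<ge> 0\<close>. Hence the class constraint holds for \<open>\<alpha>\<close> exactly when some
  \<open>\<beta>\<^sub>m\<close> makes \<open>(\<alpha>, \<beta>)\<close> feasible for the linear program, and both problems minimise the same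
  function over the same set of \<open>\<alpha>\<close>.\<close>

lemma matrix_mul_diag_mat_nth: "(X ** diag_mat a) $ r $ j = X $ r $ j * a $ j"
  by (simp add: diag_mat_def matrix_matrix_mult_def if_distrib[where f="(*) _"] cong: if_cong)

lemma diag_mat_mulv: "diag_mat a *v l = (\<chi> j. a $ j * l $ j)"
  by (simp add: vec_eq_iff diag_mat_def matrix_vector_mult_def
      if_distrib[where f="\<lambda>x. x * _"] cong: if_cong)

lemma interval_norm_mul_diag_mat:
  assumes "0 \<le> a"
  shows "interval_norm (X ** diag_mat a) = (\<Sum>r\<in>UNIV. \<Sum>j\<in>UNIV. \<bar>X $ r $ j\<bar> * a $ j)"
proof -
  have "\<bar>a $ j\<bar> = a $ j" for j using assms by (simp add: less_eq_vec_def)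
  then show ?thesis unfolding interval_norm_def matrix_mul_diag_mat_nth by (simp add: abs_mult)
qed

lemma zono_obj_eq_lp_obj:
  assumes "0 \<le> a"
  shows "zono_obj M xs D G nr R a = lp_obj M xs D G nr R a"
  unfolding zono_obj_def lp_obj_def interval_norm_mul_diag_mat[OF assms] ..

lemma box_iff_abs_le: "0 \<le> a + b \<and> 0 \<le> a - b \<longleftrightarrow> (\<forall>j. \<bar>b $ j\<bar> \<le> (a :: real^'n) $ j)"
  unfolding less_eq_vec_def abs_le_iff all_conj_distrib[symmetric]
  by (simp add: real_0_le_add_iff add.commute[of "a $ _"] conj_commute)

lemma zonotope_mul_diag_mat:
  assumes "0 \<le> a"
  shows "zonotope 0 (G ** diag_mat a) = {G *v b | b. 0 \<le> a + b \<and> 0 \<le> a - b}"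
proof (intro equalityI subsetI)
  fix u assume "u \<in> zonotope 0 (G ** diag_mat a)"
  then obtain l where l: "\<forall>j. \<bar>l $ j\<bar> \<le> 1" and u: "u = (G ** diag_mat a) *v l"
    unfolding zonotope_def by auto
  define b where "b = (\<chi> j. a $ j * l $ j)"
  have "\<bar>b $ j\<bar> \<le> a $ j" for j
    using assms l mult_left_le[of "\<bar>l $ j\<bar>" "a $ j"]
    by (simp add: b_def abs_mult less_eq_vec_def)
  moreover have "u = G *v b"
    by (simp add: u b_def diag_mat_mulv flip: matrix_vector_mul_assoc)
  ultimately show "u \<in> {G *v b | b. 0 \<le> a + b \<and> 0 \<le> a - b}"
    unfolding box_iff_abs_le by blast
next
  fix u assume "u \<in> {G *v b | b. 0 \<le> a + b \<and> 0 \<le> a - b}"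
  then obtain b where b: "\<forall>j. \<bar>b $ j\<bar> \<le> a $ j" and u: "u = G *v b"
    unfolding box_iff_abs_le by blast
  define l where "l = (\<chi> j. if a $ j = 0 then 0 else b $ j / a $ j)"
  have "\<bar>l $ j\<bar> \<le> 1" for j
    using b[rule_format, of j] by (auto simp: l_def abs_divide divide_le_eq_1)
  moreover have "(\<chi> j. a $ j * l $ j) = b"
    using b by (auto simp: vec_eq_iff l_def) (metis abs_le_zero_iff)
  then have "u = (G ** diag_mat a) *v l"
    by (simp add: u diag_mat_mulv flip: matrix_vector_mul_assoc)
  ultimately show "u \<in> zonotope 0 (G ** diag_mat a)"
    unfolding zonotope_def by auto
qed

lemma Tmat_mulv_nth: "(Tmat k *v v) $ j = v $ k - v $ j"
proof -
  have "(Tmat k *v v) $ j = (\<Sum>c\<in>UNIV. (if c = k then v $ c else 0) - (if c = j then v $ c else 0))"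
    by (auto simp: Tmat_def matrix_vector_mult_def mat_def left_diff_distrib intro!: sum.cong)
  then show ?thesis by (simp add: sum_subtractf)
qed

lemma Tmat_mulv_nonneg_iff: "0 \<le> Tmat k *v y \<longleftrightarrow> k \<in> classes_vec y"
  by (simp add: less_eq_vec_def Tmat_mulv_nth classes_vec_def)

lemma classes_vec_axis: "classes_vec (axis k (1::real)) = {k}"
  unfolding classes_vec_def by (auto simp: axis_def dest: spec[of _ k])

lemma mem_classes_set_Yset_iff:
  assumes "0 \<le> a"
  shows "k \<in> classes_set (Yset f D G a x) \<longleftrightarrow>
    (\<exists>b. 0 \<le> a + b \<and> 0 \<le> a - b \<and> - (Tmat k *v f x) \<le> (Tmat k ** D x ** G) *v b)"
proof -
  have "- (Tmat k *v f x) \<le> (Tmat k ** D x ** G) *v b \<longleftrightarrow>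
        k \<in> classes_vec (f x + D x *v (G *v b))" for b
  proof -
    have "(Tmat k ** D x ** G) *v b = Tmat k *v (D x *v (G *v b))"
      by (simp add: matrix_vector_mul_assoc matrix_mul_assoc)
    then have "- (Tmat k *v f x) \<le> (Tmat k ** D x ** G) *v b \<longleftrightarrow>
        0 \<le> Tmat k *v (f x + D x *v (G *v b))"
      by (simp add: matrix_vector_right_distrib less_eq_vec_def real_0_le_add_iff)
    then show ?thesis by (simp add: Tmat_mulv_nonneg_iff)
  qed
  moreover have "k \<in> classes_set (Yset f D G a x) \<longleftrightarrow>
      (\<exists>b. 0 \<le> a + b \<and> 0 \<le> a - b \<and> k \<in> classes_vec (f x + D x *v (G *v b)))"
    unfolding Yset_def zonotope_mul_diag_mat[OF assms] classes_set_def classes_vec_def by blast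
  ultimately show ?thesis by simp
qed

lemma ex_lp_feasible_iff:
  assumes "\<forall>m\<in>M. classes_vec (ys m) = {k m}"
  shows "(\<exists>b. lp_feasible M xs k f D G a b) \<longleftrightarrow>
    0 \<le> a \<and> (\<forall>m\<in>M. classes_vec (ys m) \<subseteq> classes_set (Yset f D G a (xs m)))"
proof (cases "0 \<le> a")
  case True
  have "(\<exists>b. lp_feasible M xs k f D G a b) \<longleftrightarrow>
      (\<forall>m\<in>M. \<exists>b. 0 \<le> a + b \<and> 0 \<le> a - b \<and>
          - (Tmat (k m) *v f (xs m)) \<le> (Tmat (k m) ** D (xs m) ** G) *v b)"
    unfolding lp_feasible_def using True by (auto dest: bchoice)
  then show ?thesis
    using assms True by (simp add: mem_classes_set_Yset_iff)
qed (simp add: lp_feasible_def)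

theorem theorem7:
  fixes f :: "real^'x \<Rightarrow> real^'y"
    and D :: "real^'x \<Rightarrow> real^'u^'y"
    and G :: "real^'v^'u"
    and nr :: nat
    and R :: "nat \<Rightarrow> real^'y^'y"
    and M :: "'m set"
    and xs :: "'m \<Rightarrow> real^'x"
    and ys :: "'m \<Rightarrow> real^'y"
    and k :: "'m \<Rightarrow> 'y"
    and a_opt :: "real^'v"
    and b_opt :: "'m \<Rightarrow> real^'v"
  assumes nr: "nr \<ge> 1"
    and R0: "R 0 = mat 1"
    and Rorth: "\<forall>i\<in>{1..nr}. orthogonal_matrix (R i)"
    and finM: "finite M"
    and ys: "\<forall>m\<in>M. ys m = axis (k m) 1"
    and feas: "lp_feasible M xs k f D G a_opt b_opt"
    and opt: "\<forall>a b. lp_feasible M xs k f D G a b \<longrightarrow>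
                 lp_obj M xs D G nr R a_opt \<le> lp_obj M xs D G nr R a"
  shows "0 \<le> a_opt
    \<and> (\<forall>m\<in>M. classes_vec (ys m) \<subseteq> classes_set (Yset f D G a_opt (xs m)))
    \<and> (\<forall>a. 0 \<le> a \<and> (\<forall>m\<in>M. classes_vec (ys m) \<subseteq> classes_set (Yset f D G a (xs m)))
           \<longrightarrow> zono_obj M xs D G nr R a_opt \<le> zono_obj M xs D G nr R a)"
proof -
  have classes_ys: "\<forall>m\<in>M. classes_vec (ys m) = {k m}"
    using ys by (simp add: classes_vec_axis)
  note feasible_iff = ex_lp_feasible_iff[OF classes_ys]
  have a_opt_feasible: "0 \<le> a_opt \<and>
      (\<forall>m\<in>M. classes_vec (ys m) \<subseteq> classes_set (Yset f D G a_opt (xs m)))"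
    using feas feasible_iff by blast
  moreover have "zono_obj M xs D G nr R a_opt \<le> zono_obj M xs D G nr R a"
    if a_feasible: "0 \<le> a \<and> (\<forall>m\<in>M. classes_vec (ys m) \<subseteq> classes_set (Yset f D G a (xs m)))"
    for a
  proof -
    obtain b where "lp_feasible M xs k f D G a b"
      using a_feasible feasible_iff by blast
    then have "lp_obj M xs D G nr R a_opt \<le> lp_obj M xs D G nr R a"
      using opt by blast
    then show ?thesis
      using a_feasible a_opt_feasible by (simp add: zono_obj_eq_lp_obj)
  qed
  ultimately show ?thesis by blast
qed

end
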